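(* For each $\beta\in(0,1]$ there exists $\Lambda>0$ such that on the domain $\{0<\lambda\le\Lambda\}\subset\mathbb{R}$ the system $$\mathbf{\Omega}(\lambda)=\mathbf{D}(0,\lambda)^\dagger-\Gamma_\beta\int_0^1\frac{\mathbf{D}\mathbf{N}(\mathbf{\Omega}(\lambda(1-w)^\beta))}{(1-w)^{2\beta}}\,dw^\beta$$ has a unique solution $\mathbf{\Omega}(\lambda)=(\Omega_1(\lambda),\Omega_2(\lambda))^\dagger$ in the class of vector-functions with non-negative continuous components.
   Context: $\mathbf{D}=(D_{ij})_{i,j=1}^2$ is a fixed $2\times2$ matrix with positive entries, $\mathbf{N}(\mathbf{x})=(N_1(\mathbf{x}),N_2(\mathbf{x}))^\dagger$ with $N_i(\mathbf{x})=\frac12\sum_{j,k=1}^2b^i_{jk}x_jx_k$ for fixed nonnegative finite constants $b^i_{jk}=b^i_{kj}$ (in the paper these are the second factorial moments of the offspring laws of a two-type branching process, and $\mathbf{D}$ is the matrix defined there from the mean offspring matrix and mean life-lengths). $\Gamma_\beta=1$ if $\beta=1$ and $\Gamma_\beta=\frac{\sin\pi\beta}{\pi\beta(1-\beta)}$ if $\beta\in(0,1)$. *)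

theory Defs
  imports "HOL-Analysis.Analysis"
begin

(* Indices of types are 1 and 2; vectors are functions nat => real restricted to {1,2},
   D :: nat => nat => real is the matrix (D i j), b i j k is b^i_{jk}. *)

definition Gamma_beta :: "real \<Rightarrow> real" where
  "Gamma_beta \<beta> = (if \<beta> = 1 then 1 else sin (pi * \<beta>) / (pi * \<beta> * (1 - \<beta>)))"

definition Nvec :: "(nat \<Rightarrow> nat \<Rightarrow> nat \<Rightarrow> real) \<Rightarrow> (nat \<Rightarrow> real) \<Rightarrow> nat \<Rightarrow> real" where
  "Nvec b x i = (1/2) * (\<Sum>j\<in>{1,2}. \<Sum>k\<in>{1,2}. b i j k * x j * x k)"

definition DN :: "(nat \<Rightarrow> nat \<Rightarrow> real) \<Rightarrow> (nat \<Rightarrow> nat \<Rightarrow> nat \<Rightarrow> real) \<Rightarrow> (nat \<Rightarrow> real) \<Rightarrow> nat \<Rightarrow> real" where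
  "DN D b x i = (\<Sum>j\<in>{1,2}. D i j * Nvec b x j)"

(* integrand (w.r.t. Lebesgue measure dw on (0,1)) of the i-th component, with
   d(w^beta) = beta * w^(beta-1) dw *)
definition integrand :: "(nat \<Rightarrow> nat \<Rightarrow> real) \<Rightarrow> (nat \<Rightarrow> nat \<Rightarrow> nat \<Rightarrow> real) \<Rightarrow> real
    \<Rightarrow> (real \<Rightarrow> nat \<Rightarrow> real) \<Rightarrow> real \<Rightarrow> nat \<Rightarrow> real \<Rightarrow> real" where
  "integrand D b \<beta> \<Omega> l i w =
     DN D b (\<Omega> (l * (1 - w) powr \<beta>)) i / (1 - w) powr (2 * \<beta>) * (\<beta> * w powr (\<beta> - 1))"

definition is_solution :: "(nat \<Rightarrow> nat \<Rightarrow> real) \<Rightarrow> (nat \<Rightarrow> nat \<Rightarrow> nat \<Rightarrow> real) \<Rightarrow> real \<Rightarrow> real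
    \<Rightarrow> (real \<Rightarrow> nat \<Rightarrow> real) \<Rightarrow> bool" where
  "is_solution D b \<beta> \<Lambda> \<Omega> \<longleftrightarrow>
     (\<forall>i\<in>{1,2}. continuous_on {0<..\<Lambda>} (\<lambda>l. \<Omega> l i) \<and> (\<forall>l\<in>{0<..\<Lambda>}. 0 \<le> \<Omega> l i)) \<and>
     (\<forall>l\<in>{0<..\<Lambda>}. \<forall>i\<in>{1,2}.
        set_integrable lborel {0<..<1} (integrand D b \<beta> \<Omega> l i) \<and>
        \<Omega> l i = D i 2 * l - Gamma_beta \<beta> * (LINT w:{0<..<1}|lborel. integrand D b \<beta> \<Omega> l i w))"

end

theory Submission
  imports Defs
begin

(* Writing \<Omega>(\<lambda>) = \<lambda> g(\<lambda>) removes the singularity of the kernel: DN is homogeneous of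
   degree 2, so the factor (1 - w)^(2\<beta>) cancels and the equation becomes
   g(\<lambda>) = D(\<cdot>,2) - \<Gamma>\<^sub>\<beta> \<lambda> E[DN(g(\<lambda>(1 - w)^\<beta>))], the expectation being taken against the
   probability density \<beta> w^(\<beta>-1) on (0,1).  For small \<Lambda> the right-hand side maps bounded,
   nonnegative, Lipschitz functions into themselves and halves sup-distances, so Banach's fixed
   point theorem yields a solution.  Conversely every solution satisfies 0 \<le> \<Omega>(\<lambda>) \<le> R\<lambda>, and
   inserting two solutions into the equation halves a bound |\<Omega> - \<Omega>'| \<le> m\<lambda>; hence the two
   agree. *)

lemma power_weight_integral:
  fixes \<beta> :: real
  assumes "0 < \<beta>"
  shows set_integrable_power_weight: "set_integrable lborel {0<..<1::real} (\<lambda>w. \<beta> * w powr (\<beta> - 1))"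
    and set_integral_power_weight: "(LINT w:{0<..<1}|lborel. \<beta> * w powr (\<beta> - 1)) = 1"
proof -
  have interval: "einterval 0 1 = {0<..<1::real}" by (simp add: zero_ereal_def one_ereal_def)
  have deriv: "\<And>x. 0 < ereal x \<Longrightarrow> ereal x < 1 \<Longrightarrow> DERIV (\<lambda>x. x powr \<beta>) x :> \<beta> * x powr (\<beta> - 1)"
    by (rule has_real_derivative_powr) auto
  have cont: "\<And>x. 0 < ereal x \<Longrightarrow> ereal x < 1 \<Longrightarrow> isCont (\<lambda>w. \<beta> * w powr (\<beta> - 1)) x"
    by (auto intro!: continuous_intros)
  have nonneg: "AE x in lborel. 0 < ereal x \<longrightarrow> ereal x < 1 \<longrightarrow> 0 \<le> \<beta> * x powr (\<beta> - 1)"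
    using assms by auto
  have lim0: "(((\<lambda>x. x powr \<beta>) \<circ> real_of_ereal) \<longlongrightarrow> 0) (at_right 0)"
    unfolding zero_ereal_def ereal_tendsto_simps
    using assms by (auto intro!: tendsto_eq_intros eventually_at_rightI[of 0 1])
  have lim1: "(((\<lambda>x. x powr \<beta>) \<circ> real_of_ereal) \<longlongrightarrow> 1) (at_left 1)"
    unfolding one_ereal_def ereal_tendsto_simps
    using assms by (auto intro!: tendsto_eq_intros)
  note FTC = interval_integral_FTC_nonneg[OF _ deriv cont nonneg lim0 lim1]
  show "set_integrable lborel {0<..<1::real} (\<lambda>w. \<beta> * w powr (\<beta> - 1))"
    using FTC(1) interval by simp
  show "(LINT w:{0<..<1}|lborel. \<beta> * w powr (\<beta> - 1)) = 1"
    using FTC(2) interval by (simp add: interval_lebesgue_integral_def one_ereal_def zero_ereal_def)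
qed

lemma set_integral_nonneg_real:
  fixes f :: "real \<Rightarrow> real"
  assumes "\<And>x. x \<in> A \<Longrightarrow> 0 \<le> f x"
  shows "0 \<le> (LINT x:A|lborel. f x)"
  unfolding set_lebesgue_integral_def
  by (rule integral_nonneg_AE) (use assms in \<open>auto simp: indicator_def\<close>)

lemma abs_set_integral_le_set_integral:
  fixes f g :: "real \<Rightarrow> real"
  assumes f: "set_integrable lborel A f" and g: "set_integrable lborel A g"
    and le: "\<And>x. x \<in> A \<Longrightarrow> \<bar>f x\<bar> \<le> g x"
  shows "\<bar>LINT x:A|lborel. f x\<bar> \<le> (LINT x:A|lborel. g x)"
proof -
  have "\<bar>LINT x:A|lborel. f x\<bar> \<le> (LINT x:A|lborel. \<bar>f x\<bar>)"
    using set_integral_norm_bound[OF f] by simp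
  also have "\<dots> \<le> (LINT x:A|lborel. g x)"
    using f g le by (intro set_integral_mono set_integrable_abs) auto
  finally show ?thesis .
qed

lemma bounded_times_power_weight:
  fixes \<beta> C :: real and f :: "real \<Rightarrow> real"
  assumes \<beta>: "0 < \<beta>" and f: "f \<in> borel_measurable borel"
    and bound: "\<And>w. w \<in> {0<..<1} \<Longrightarrow> \<bar>f w\<bar> \<le> C"
  shows set_integrable_bounded_times_power_weight:
      "set_integrable lborel {0<..<1::real} (\<lambda>w. f w * (\<beta> * w powr (\<beta> - 1)))"
    and abs_set_integral_bounded_times_power_weight:
      "\<bar>LINT w:{0<..<1}|lborel. f w * (\<beta> * w powr (\<beta> - 1))\<bar> \<le> C"
proof -
  have weight: "set_integrable lborel {0<..<1::real} (\<lambda>w. C * (\<beta> * w powr (\<beta> - 1)))"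
    using set_integrable_power_weight[OF \<beta>] by simp
  have le: "\<bar>f w * (\<beta> * w powr (\<beta> - 1))\<bar> \<le> C * (\<beta> * w powr (\<beta> - 1))" if "w \<in> {0<..<1}" for w
    using bound[OF that] \<beta> by (simp add: abs_mult mult_right_mono)
  show int: "set_integrable lborel {0<..<1::real} (\<lambda>w. f w * (\<beta> * w powr (\<beta> - 1)))"
  proof (rule set_integrable_bound[OF weight _ AE_I2], safe)
    show "set_borel_measurable lborel {0<..<1::real} (\<lambda>w. f w * (\<beta> * w powr (\<beta> - 1)))"
      using f unfolding set_borel_measurable_def by measurable
    fix w :: real assume "w \<in> {0<..<1}"
    then show "norm (f w * (\<beta> * w powr (\<beta> - 1))) \<le> norm (C * (\<beta> * w powr (\<beta> - 1)))"
      using le[of w] unfolding real_norm_def by linarith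
  qed
  have "\<bar>LINT w:{0<..<1}|lborel. f w * (\<beta> * w powr (\<beta> - 1))\<bar> \<le> (LINT w:{0<..<1}|lborel. C * (\<beta> * w powr (\<beta> - 1)))"
    by (rule abs_set_integral_le_set_integral[OF int weight le])
  also have "\<dots> = C"
    using set_integral_power_weight[OF \<beta>] by simp
  finally show "\<bar>LINT w:{0<..<1}|lborel. f w * (\<beta> * w powr (\<beta> - 1))\<bar> \<le> C" .
qed

lemma abs_mult_diff_le:
  fixes a c u v R \<delta> :: real
  assumes "\<bar>a\<bar> \<le> R" "\<bar>v\<bar> \<le> R" "\<bar>a - u\<bar> \<le> \<delta>" "\<bar>c - v\<bar> \<le> \<delta>"
  shows "\<bar>a * c - u * v\<bar> \<le> 2 * R * \<delta>"
proof -
  have "a * c - u * v = a * (c - v) + v * (a - u)" by algebra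
  hence "\<bar>a * c - u * v\<bar> \<le> \<bar>a\<bar> * \<bar>c - v\<bar> + \<bar>v\<bar> * \<bar>a - u\<bar>"
    by (simp add: abs_mult abs_triangle_ineq[THEN order_trans])
  also have "\<dots> \<le> R * \<delta> + R * \<delta>"
    using assms by (intro add_mono mult_mono) auto
  finally show ?thesis by simp
qed

definition DN_lipschitz_const :: "(nat \<Rightarrow> nat \<Rightarrow> real) \<Rightarrow> (nat \<Rightarrow> nat \<Rightarrow> nat \<Rightarrow> real) \<Rightarrow> real" where
  "DN_lipschitz_const D b = (\<Sum>i\<in>{1,2}. \<Sum>j\<in>{1,2}. D i j * (\<Sum>k\<in>{1,2}. \<Sum>l\<in>{1,2}. b j k l))"

lemma DN_homogeneous: "DN D b (\<lambda>j. s * x j) i = s\<^sup>2 * DN D b x i"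
  unfolding DN_def Nvec_def by (simp add: sum_distrib_left algebra_simps power2_eq_square)

lemma DN_zero: "DN D b (\<lambda>j. 0) i = 0"
  unfolding DN_def Nvec_def by simp

locale nonneg_coefficients =
  fixes D :: "nat \<Rightarrow> nat \<Rightarrow> real" and b :: "nat \<Rightarrow> nat \<Rightarrow> nat \<Rightarrow> real"
  assumes D_nonneg: "\<And>i j. i \<in> {1,2} \<Longrightarrow> j \<in> {1,2} \<Longrightarrow> 0 \<le> D i j"
    and b_nonneg: "\<And>i j k. i \<in> {1,2} \<Longrightarrow> j \<in> {1,2} \<Longrightarrow> k \<in> {1,2} \<Longrightarrow> 0 \<le> b i j k"
begin

abbreviation K :: real where "K \<equiv> DN_lipschitz_const D b"

lemma K_nonneg: "0 \<le> K"
  unfolding DN_lipschitz_const_def using D_nonneg b_nonneg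
  by (intro sum_nonneg mult_nonneg_nonneg) auto

lemma DN_nonneg:
  assumes "\<And>k. k \<in> {1,2} \<Longrightarrow> 0 \<le> x k" and "i \<in> {1,2}"
  shows "0 \<le> DN D b x i"
  unfolding DN_def Nvec_def using D_nonneg b_nonneg assms
  by (intro sum_nonneg mult_nonneg_nonneg) auto

lemma Nvec_diff_le:
  assumes xy: "\<And>k. k \<in> {1,2} \<Longrightarrow> \<bar>x k\<bar> \<le> R \<and> \<bar>y k\<bar> \<le> R \<and> \<bar>x k - y k\<bar> \<le> \<delta>"
    and j: "j \<in> {1,2}"
  shows "\<bar>Nvec b x j - Nvec b y j\<bar> \<le> (\<Sum>k\<in>{1,2}. \<Sum>l\<in>{1,2}. b j k l) * (R * \<delta>)"
proof -
  have term_le: "\<bar>b j k l * (x k * x l - y k * y l)\<bar> \<le> b j k l * (2 * R * \<delta>)"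
    if "k \<in> {1,2}" "l \<in> {1,2}" for k l
  proof -
    have "\<bar>x k * x l - y k * y l\<bar> \<le> 2 * R * \<delta>"
      using xy that by (intro abs_mult_diff_le) auto
    thus ?thesis using b_nonneg[OF j that] by (simp add: abs_mult mult_left_mono)
  qed
  have "Nvec b x j - Nvec b y j = (1/2) * (\<Sum>k\<in>{1,2}. \<Sum>l\<in>{1,2}. b j k l * (x k * x l - y k * y l))"
    unfolding Nvec_def by (simp add: algebra_simps sum_subtractf[symmetric])
  also have "\<bar>\<dots>\<bar> \<le> (1/2) * (\<Sum>k\<in>{1,2}. \<Sum>l\<in>{1,2}. b j k l * (2 * R * \<delta>))"
  proof -
    have "\<bar>\<Sum>k\<in>{1,2}. \<Sum>l\<in>{1,2}. b j k l * (x k * x l - y k * y l)\<bar>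
        \<le> (\<Sum>k\<in>{1,2}. \<Sum>l\<in>{1,2::nat}. b j k l * (2 * R * \<delta>))"
      using term_le by (intro order_trans[OF sum_abs] sum_mono order_trans[OF sum_abs] sum_mono) auto
    thus ?thesis by (simp add: abs_mult)
  qed
  also have "\<dots> = (\<Sum>k\<in>{1,2}. \<Sum>l\<in>{1,2}. b j k l) * (R * \<delta>)"
    by (simp add: sum_distrib_right algebra_simps)
  finally show ?thesis .
qed

lemma DN_diff_le:
  assumes xy: "\<And>k. k \<in> {1,2} \<Longrightarrow> \<bar>x k\<bar> \<le> R \<and> \<bar>y k\<bar> \<le> R \<and> \<bar>x k - y k\<bar> \<le> \<delta>"
    and i: "i \<in> {1,2}"
  shows "\<bar>DN D b x i - DN D b y i\<bar> \<le> K * (R * \<delta>)"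
proof -
  define B where "B j = (\<Sum>k\<in>{1,2}. \<Sum>l\<in>{1,2}. b j k l)" for j
  have "0 \<le> R" "0 \<le> \<delta>" using xy[of 1] by auto
  hence R\<delta>: "0 \<le> R * \<delta>" by simp
  have term_le: "\<bar>D i j * (Nvec b x j - Nvec b y j)\<bar> \<le> D i j * B j * (R * \<delta>)" if j: "j \<in> {1,2}" for j
  proof -
    have "\<bar>Nvec b x j - Nvec b y j\<bar> \<le> B j * (R * \<delta>)"
      unfolding B_def using xy j by (rule Nvec_diff_le)
    thus ?thesis using D_nonneg[OF i j] by (simp add: abs_mult mult_left_mono mult.assoc)
  qed
  have row_nonneg: "0 \<le> (\<Sum>j\<in>{1,2}. D i' j * B j)" if "i' \<in> {1,2}" for i'
    using D_nonneg b_nonneg that unfolding B_def by (intro sum_nonneg mult_nonneg_nonneg) auto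
  have "DN D b x i - DN D b y i = (\<Sum>j\<in>{1,2}. D i j * (Nvec b x j - Nvec b y j))"
    unfolding DN_def by (simp add: algebra_simps)
  also have "\<bar>\<dots>\<bar> \<le> (\<Sum>j\<in>{1,2}. D i j * B j * (R * \<delta>))"
    using term_le by (intro order_trans[OF sum_abs] sum_mono)
  also have "\<dots> = (\<Sum>j\<in>{1,2}. D i j * B j) * (R * \<delta>)"
    by (rule sum_distrib_right[symmetric])
  also have "\<dots> \<le> K * (R * \<delta>)"
  proof (rule mult_right_mono[OF _ R\<delta>])
    have "(\<Sum>j\<in>{1,2}. D i j * B j) \<le> (\<Sum>i\<in>{1,2}. \<Sum>j\<in>{1,2}. D i j * B j)"
      using i row_nonneg by (intro member_le_sum) auto
    thus "(\<Sum>j\<in>{1,2}. D i j * B j) \<le> K"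
      unfolding DN_lipschitz_const_def B_def by simp
  qed
  finally show ?thesis .
qed

lemma DN_le:
  assumes "\<And>k. k \<in> {1,2} \<Longrightarrow> 0 \<le> x k \<and> x k \<le> R" and "i \<in> {1,2}"
  shows "DN D b x i \<le> K * (R * R)"
proof -
  have "0 \<le> R" using assms(1)[of 1] by simp
  hence "\<bar>DN D b x i - DN D b (\<lambda>j. 0) i\<bar> \<le> K * (R * R)"
    using assms by (intro DN_diff_le) auto
  thus ?thesis by (simp add: DN_zero)
qed

end

lemma Gamma_beta_nonneg:
  assumes "0 < \<beta>" "\<beta> \<le> 1"
  shows "0 \<le> Gamma_beta \<beta>"
proof (cases "\<beta> = 1")
  case False
  hence "0 < sin (pi * \<beta>)" "0 < pi * \<beta> * (1 - \<beta>)"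
    using assms by (auto intro!: sin_gt_zero)
  thus ?thesis by (simp add: Gamma_beta_def)
qed (simp add: Gamma_beta_def)

definition of_pair :: "real \<times> real \<Rightarrow> nat \<Rightarrow> real" where
  "of_pair p j = (if j = 1 then fst p else snd p)"

lemma of_pair_simps [simp]: "of_pair p 1 = fst p" "of_pair p (Suc 0) = fst p" "of_pair p 2 = snd p"
  by (simp_all add: of_pair_def)

lemma of_pair_in_box:
  assumes "p \<in> {0..R} \<times> {0..R}" "j \<in> {1,2}"
  shows "0 \<le> of_pair p j \<and> of_pair p j \<le> R"
  using assms by (auto simp: of_pair_def)

lemma abs_of_pair_diff_le_dist: "\<bar>of_pair p j - of_pair q j\<bar> \<le> dist p q"
  unfolding of_pair_def dist_real_def[symmetric]
  by (auto intro: dist_fst_le dist_snd_le)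

lemma dist_le_of_pair:
  assumes "\<And>j. j \<in> {1,2} \<Longrightarrow> \<bar>of_pair p j - of_pair q j\<bar> \<le> e"
  shows "dist p q \<le> 2 * e"
proof -
  have "dist p q \<le> dist (fst p) (fst q) + dist (snd p) (snd q)"
    unfolding dist_prod_def by (rule sqrt_sum_squares_le_sum_abs[THEN order_trans]) (simp add: dist_real_def)
  also have "\<dots> \<le> e + e"
    using assms[of 1] assms[of 2] by (simp add: dist_real_def)
  finally show ?thesis by simp
qed

lemma continuous_on_of_pair:
  assumes "continuous_on S g"
  shows "continuous_on S (\<lambda>x. of_pair (g x) j)"
  unfolding of_pair_def using assms by (cases "j = 1") (auto intro!: continuous_intros)

lemma integrand_scaled:
  assumes "w \<in> {0<..<1}"
  shows "integrand D b \<beta> (\<lambda>l j. l * x l j) l i w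
           = l\<^sup>2 * (DN D b (x (l * (1 - w) powr \<beta>)) i * (\<beta> * w powr (\<beta> - 1)))"
proof -
  define p where "p = (1 - w) powr \<beta>"
  have "0 < p" unfolding p_def using assms by auto
  moreover have "(1 - w) powr (2 * \<beta>) = p * p"
    unfolding p_def using assms by (simp add: powr_add[symmetric])
  ultimately show ?thesis
    unfolding integrand_def DN_homogeneous p_def[symmetric]
    by (simp add: power2_eq_square field_simps)
qed

lemma scaled_time_mem:
  assumes "0 \<le> \<beta>" "l \<in> {0<..\<Lambda>}" "w \<in> {0<..<1::real}"
  shows "l * (1 - w) powr \<beta> \<in> {0<..\<Lambda>}"
proof -
  have p: "0 < (1 - w) powr \<beta>" "(1 - w) powr \<beta> \<le> 1" using assms by (auto intro!: powr_le1)
  then have "l * (1 - w) powr \<beta> \<le> l" "0 < l * (1 - w) powr \<beta>"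
    using assms(2) by (auto intro: mult_left_le)
  then show ?thesis using assms(2) by simp
qed

lemma continuous_on_eval_bcontfun: "continuous_on S (\<lambda>g. apply_bcontfun g x)"
  by (rule lipschitz_on_continuous_on[of 1], rule lipschitz_onI) (simp_all add: dist_bounded)

locale renewal_equation = nonneg_coefficients +
  fixes \<beta> :: real
  assumes beta_pos: "0 < \<beta>" and beta_le_one: "\<beta> \<le> 1"
begin

abbreviation \<Gamma> :: real where "\<Gamma> \<equiv> Gamma_beta \<beta>"

lemma Gamma_nonneg: "0 \<le> \<Gamma>"
  using Gamma_beta_nonneg[OF beta_pos beta_le_one] .

(* The integral of the equation after the substitution \<Omega>(\<lambda>) = \<lambda> g(\<lambda>), without the factor \<lambda>\<^sup>2. *)
definition mean_DN :: "(real \<Rightarrow> real \<times> real) \<Rightarrow> nat \<Rightarrow> real \<Rightarrow> real" where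
  "mean_DN g i l = (LINT w:{0<..<1}|lborel. DN D b (of_pair (g (l * (1 - w) powr \<beta>))) i * (\<beta> * w powr (\<beta> - 1)))"

lemma measurable_DN_comp:
  assumes "continuous_on UNIV g"
  shows "(\<lambda>w. DN D b (of_pair (g (l * (1 - w) powr \<beta>))) i) \<in> borel_measurable borel"
proof -
  have [measurable]: "(\<lambda>s. of_pair (g s) j) \<in> borel_measurable borel" for j
    using assms by (intro borel_measurable_continuous_onI continuous_on_of_pair)
  show ?thesis unfolding DN_def Nvec_def by measurable
qed

lemma
  assumes g: "continuous_on UNIV g" "range g \<subseteq> {0..R} \<times> {0..R}" and i: "i \<in> {1,2}"
  shows set_integrable_mean_DN:
      "set_integrable lborel {0<..<1} (\<lambda>w. DN D b (of_pair (g (l * (1 - w) powr \<beta>))) i * (\<beta> * w powr (\<beta> - 1)))"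
    and mean_DN_nonneg: "0 \<le> mean_DN g i l"
    and mean_DN_le: "mean_DN g i l \<le> K * (R * R)"
proof -
  have box: "0 \<le> of_pair (g s) k \<and> of_pair (g s) k \<le> R" if "k \<in> {1,2}" for s k
    using g(2) that by (intro of_pair_in_box) auto
  have nonneg: "0 \<le> DN D b (of_pair (g s)) i" for s
    using box by (intro DN_nonneg i) blast
  have "\<bar>DN D b (of_pair (g s)) i\<bar> \<le> K * (R * R)" for s
    using nonneg DN_le[OF box i] by simp
  note bound = bounded_times_power_weight[OF beta_pos measurable_DN_comp[OF g(1)] this]
  show "set_integrable lborel {0<..<1} (\<lambda>w. DN D b (of_pair (g (l * (1 - w) powr \<beta>))) i * (\<beta> * w powr (\<beta> - 1)))"
    by (rule bound(1))
  show "0 \<le> mean_DN g i l" unfolding mean_DN_def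
    using nonneg beta_pos by (intro set_integral_nonneg_real mult_nonneg_nonneg) auto
  have "\<bar>mean_DN g i l\<bar> \<le> K * (R * R)" unfolding mean_DN_def by (rule bound(2))
  thus "mean_DN g i l \<le> K * (R * R)" by simp
qed

lemma mean_DN_diff_le:
  assumes g: "continuous_on UNIV g" "range g \<subseteq> {0..R} \<times> {0..R}"
    and h: "continuous_on UNIV h" "range h \<subseteq> {0..R} \<times> {0..R}"
    and close: "\<And>w. w \<in> {0<..<1} \<Longrightarrow> dist (g (l * (1 - w) powr \<beta>)) (h (l' * (1 - w) powr \<beta>)) \<le> d"
    and i: "i \<in> {1,2}"
  shows "\<bar>mean_DN g i l - mean_DN h i l'\<bar> \<le> K * (R * d)"
proof -
  let ?f = "\<lambda>w. DN D b (of_pair (g (l * (1 - w) powr \<beta>))) i - DN D b (of_pair (h (l' * (1 - w) powr \<beta>))) i"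
  have eq: "mean_DN g i l - mean_DN h i l' = (LINT w:{0<..<1}|lborel. ?f w * (\<beta> * w powr (\<beta> - 1)))"
    unfolding mean_DN_def left_diff_distrib
    using set_integral_diff(2)[OF set_integrable_mean_DN[OF g i] set_integrable_mean_DN[OF h i]] by simp
  show ?thesis
    unfolding eq
  proof (rule abs_set_integral_bounded_times_power_weight[OF beta_pos])
    show "?f \<in> borel_measurable borel"
      using measurable_DN_comp[OF g(1)] measurable_DN_comp[OF h(1)] by (rule borel_measurable_diff)
    fix w :: real assume w: "w \<in> {0<..<1}"
    show "\<bar>?f w\<bar> \<le> K * (R * d)"
    proof (rule DN_diff_le[OF _ i])
      fix k :: nat assume k: "k \<in> {1,2}"
      let ?x = "g (l * (1 - w) powr \<beta>)" and ?y = "h (l' * (1 - w) powr \<beta>)"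
      have "?x \<in> {0..R} \<times> {0..R}" "?y \<in> {0..R} \<times> {0..R}" using g(2) h(2) by auto
      hence "0 \<le> of_pair ?x k \<and> of_pair ?x k \<le> R" "0 \<le> of_pair ?y k \<and> of_pair ?y k \<le> R"
        using k by (auto intro: of_pair_in_box)
      moreover have "\<bar>of_pair ?x k - of_pair ?y k\<bar> \<le> d"
        using abs_of_pair_diff_le_dist close[OF w] by (rule order_trans)
      ultimately show "\<bar>of_pair ?x k\<bar> \<le> R \<and> \<bar>of_pair ?y k\<bar> \<le> R \<and> \<bar>of_pair ?x k - of_pair ?y k\<bar> \<le> d"
        by auto
    qed
  qed
qed

lemma mean_DN_lipschitz:
  assumes g: "L-lipschitz_on UNIV g" "range g \<subseteq> {0..R} \<times> {0..R}" and i: "i \<in> {1,2}"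
  shows "\<bar>mean_DN g i a - mean_DN g i a'\<bar> \<le> K * (R * (L * \<bar>a - a'\<bar>))"
  using lipschitz_on_continuous_on[OF g(1)] g(2) lipschitz_on_continuous_on[OF g(1)] g(2) _ i
proof (rule mean_DN_diff_le)
  fix w :: real assume w: "w \<in> {0<..<1}"
  have p: "0 \<le> (1 - w) powr \<beta>" "(1 - w) powr \<beta> \<le> 1"
    using w beta_pos by (auto intro!: powr_le1)
  have "dist (g (a * (1 - w) powr \<beta>)) (g (a' * (1 - w) powr \<beta>)) \<le> L * (\<bar>a - a'\<bar> * (1 - w) powr \<beta>)"
    using lipschitz_onD[OF g(1), of "a * (1 - w) powr \<beta>" "a' * (1 - w) powr \<beta>"] p
    by (simp add: dist_real_def left_diff_distrib[symmetric] abs_mult)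
  also have "\<dots> \<le> L * \<bar>a - a'\<bar>"
    using p lipschitz_on_nonneg[OF g(1)] by (intro mult_left_mono mult_left_le) auto
  finally show "dist (g (a * (1 - w) powr \<beta>)) (g (a' * (1 - w) powr \<beta>)) \<le> L * \<bar>a - a'\<bar>" .
qed

end

locale small_window = renewal_equation +
  fixes R \<Lambda> :: real
  assumes D_le_R: "\<And>i. i \<in> {1,2} \<Longrightarrow> D i 2 \<le> R"
    and Lambda_pos: "0 < \<Lambda>"
    and Lambda_contraction: "Gamma_beta \<beta> * \<Lambda> * K * R \<le> 1/4"
    and Lambda_range: "\<And>i. i \<in> {1,2} \<Longrightarrow> Gamma_beta \<beta> * \<Lambda> * (K * (R * R)) \<le> D i 2"
begin

(* Per component, the Lipschitz constant of picard g is \<Gamma>KR\<^sup>2 + \<Gamma>\<Lambda>KR \<cdot> L \<le> L/4 + L/4. *)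
definition L :: real where "L = 4 * \<Gamma> * K * (R * R)"

definition admissible :: "(real \<Rightarrow> real \<times> real) \<Rightarrow> bool" where
  "admissible g \<longleftrightarrow> range g \<subseteq> {0..R} \<times> {0..R} \<and> L-lipschitz_on UNIV g"

(* Clamping the argument to [0, \<Lambda>] lets the operator act on the Banach space of bounded
   continuous functions on the whole real line. *)
definition picard :: "(real \<Rightarrow> real \<times> real) \<Rightarrow> real \<Rightarrow> real \<times> real" where
  "picard g x = (let l = clamp 0 \<Lambda> x in
     (D 1 2 - \<Gamma> * l * mean_DN g 1 l, D 2 2 - \<Gamma> * l * mean_DN g 2 l))"

lemma R_nonneg: "0 \<le> R"
  using D_nonneg[of 1 2] D_le_R[of 1] by simp

lemma L_nonneg: "0 \<le> L"
  unfolding L_def using Gamma_nonneg K_nonneg R_nonneg by simp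

lemma clamp_Lambda: "0 \<le> clamp 0 \<Lambda> x" "clamp 0 \<Lambda> x \<le> \<Lambda>"
  using clamp_in_interval[of 0 \<Lambda> x] Lambda_pos by auto

lemma of_pair_picard:
  "i \<in> {1,2} \<Longrightarrow> of_pair (picard g x) i = D i 2 - \<Gamma> * clamp 0 \<Lambda> x * mean_DN g i (clamp 0 \<Lambda> x)"
  unfolding picard_def Let_def of_pair_def by auto

lemma picard_range:
  assumes "continuous_on UNIV g" "range g \<subseteq> {0..R} \<times> {0..R}"
  shows "range (picard g) \<subseteq> {0..R} \<times> {0..R}"
proof -
  have "0 \<le> of_pair (picard g x) i \<and> of_pair (picard g x) i \<le> R" if i: "i \<in> {1,2}" for x i
  proof -
    let ?l = "clamp 0 \<Lambda> x"
    have mean: "0 \<le> mean_DN g i ?l" "mean_DN g i ?l \<le> K * (R * R)"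
      using mean_DN_nonneg[OF assms i] mean_DN_le[OF assms i] by auto
    have "0 \<le> \<Gamma> * ?l * mean_DN g i ?l"
      using Gamma_nonneg clamp_Lambda mean by simp
    moreover have "\<Gamma> * ?l * mean_DN g i ?l \<le> \<Gamma> * \<Lambda> * (K * (R * R))"
      using Gamma_nonneg clamp_Lambda Lambda_pos mean by (intro mult_mono) auto
    ultimately show ?thesis
      using of_pair_picard[OF i] Lambda_range[OF i] D_le_R[OF i] by auto
  qed
  from this[of 1] this[of 2] show ?thesis by (simp add: image_subset_iff mem_Times_iff)
qed

lemma picard_lipschitz:
  assumes "admissible g"
  shows "L-lipschitz_on UNIV (picard g)"
proof (rule lipschitz_onI[OF _ L_nonneg])
  fix s t :: real
  let ?a = "clamp 0 \<Lambda> s" and ?a' = "clamp 0 \<Lambda> t"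
  have g: "L-lipschitz_on UNIV g" "range g \<subseteq> {0..R} \<times> {0..R}" "continuous_on UNIV g"
    using assms lipschitz_on_continuous_on unfolding admissible_def by auto
  have \<delta>: "\<bar>?a - ?a'\<bar> \<le> dist s t"
    using dist_clamps_le_dist_args[of 0 \<Lambda> s t] by (simp add: dist_real_def)
  have "\<bar>of_pair (picard g s) i - of_pair (picard g t) i\<bar> \<le> L / 2 * dist s t" if i: "i \<in> {1,2}" for i
  proof -
    let ?M = "mean_DN g i"
    have bound: "\<bar>?M ?a'\<bar> \<le> K * (R * R)"
      using mean_DN_nonneg[OF g(3,2) i] mean_DN_le[OF g(3,2) i] by simp
    have "of_pair (picard g s) i - of_pair (picard g t) i = \<Gamma> * ((?a' - ?a) * ?M ?a' + ?a * (?M ?a' - ?M ?a))"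
      unfolding of_pair_picard[OF i] by (simp add: algebra_simps)
    also have "\<bar>\<dots>\<bar> \<le> \<Gamma> * (\<bar>?a - ?a'\<bar> * (K * (R * R)) + \<Lambda> * (K * (R * (L * \<bar>?a - ?a'\<bar>))))"
      unfolding abs_mult[of \<Gamma>] abs_of_nonneg[OF Gamma_nonneg]
    proof (intro mult_left_mono[OF _ Gamma_nonneg] abs_triangle_ineq[THEN order_trans] add_mono)
      show "\<bar>(?a' - ?a) * ?M ?a'\<bar> \<le> \<bar>?a - ?a'\<bar> * (K * (R * R))"
        using bound by (simp add: abs_mult abs_minus_commute mult_left_mono)
      show "\<bar>?a * (?M ?a' - ?M ?a)\<bar> \<le> \<Lambda> * (K * (R * (L * \<bar>?a - ?a'\<bar>)))"
        using mean_DN_lipschitz[OF g(1,2) i, of ?a' ?a] clamp_Lambda[of s]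
        by (simp add: abs_mult abs_minus_commute mult_mono)
    qed
    also have "\<dots> = \<bar>?a - ?a'\<bar> * (\<Gamma> * K * (R * R) + (\<Gamma> * \<Lambda> * K * R) * L)"
      by (simp add: algebra_simps)
    also have "\<dots> \<le> \<bar>?a - ?a'\<bar> * (L / 4 + 1/4 * L)"
      using Lambda_contraction L_nonneg by (intro mult_left_mono add_mono mult_right_mono) (auto simp: L_def)
    also have "\<dots> = L / 2 * \<bar>?a - ?a'\<bar>" by simp
    also have "\<dots> \<le> L / 2 * dist s t"
      using \<delta> L_nonneg by (intro mult_left_mono) auto
    finally show ?thesis .
  qed
  then show "dist (picard g s) (picard g t) \<le> L * dist s t"
    using dist_le_of_pair[of "picard g s" "picard g t" "L / 2 * dist s t"] by simp
qed

lemma picard_admissible: "admissible g \<Longrightarrow> admissible (picard g)"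
  using picard_range picard_lipschitz lipschitz_on_continuous_on unfolding admissible_def by blast

lemma dist_picard_le:
  assumes g: "continuous_on UNIV g" "range g \<subseteq> {0..R} \<times> {0..R}"
    and h: "continuous_on UNIV h" "range h \<subseteq> {0..R} \<times> {0..R}"
    and close: "\<And>s. dist (g s) (h s) \<le> d"
  shows "dist (picard g x) (picard h x) \<le> d / 2"
proof -
  let ?a = "clamp 0 \<Lambda> x"
  have "\<bar>of_pair (picard g x) i - of_pair (picard h x) i\<bar> \<le> 1/4 * d" if i: "i \<in> {1,2}" for i
  proof -
    have "of_pair (picard g x) i - of_pair (picard h x) i = \<Gamma> * ?a * (mean_DN h i ?a - mean_DN g i ?a)"
      unfolding of_pair_picard[OF i] by (simp add: algebra_simps)
    also have "\<bar>\<dots>\<bar> \<le> \<Gamma> * \<Lambda> * (K * (R * d))"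
    proof -
      have "\<bar>mean_DN g i ?a - mean_DN h i ?a\<bar> \<le> K * (R * d)"
        using close by (intro mean_DN_diff_le[OF g h _ i])
      then show ?thesis
        using Gamma_nonneg clamp_Lambda[of x] by (simp add: abs_mult abs_minus_commute mult_mono)
    qed
    also have "\<dots> = (\<Gamma> * \<Lambda> * K * R) * d" by simp
    also have "\<dots> \<le> 1/4 * d"
      using Lambda_contraction order_trans[OF zero_le_dist close] by (rule mult_right_mono)
    finally show ?thesis .
  qed
  then show ?thesis using dist_le_of_pair[of "picard g x" "picard h x" "1/4 * d"] by simp
qed

lemma admissible_bcontfun:
  assumes "admissible g"
  shows "g \<in> bcontfun"
proof (rule bcontfun_normI)
  show "continuous_on UNIV g"
    using assms lipschitz_on_continuous_on unfolding admissible_def by blast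
  fix x
  have "g x \<in> {0..R} \<times> {0..R}" using assms unfolding admissible_def by blast
  then have "norm (fst (g x)) + norm (snd (g x)) \<le> R + R" by (auto simp: mem_Times_iff)
  then show "norm (g x) \<le> R + R"
    using norm_Pair_le[of "fst (g x)" "snd (g x)"] by simp
qed

lemma closed_admissible: "closed {g :: real \<Rightarrow>\<^sub>C (real \<times> real). admissible (apply_bcontfun g)}"
proof -
  have "{g :: real \<Rightarrow>\<^sub>C (real \<times> real). admissible (apply_bcontfun g)} = {g. \<forall>s t.
      0 \<le> fst (apply_bcontfun g s) \<and> fst (apply_bcontfun g s) \<le> R \<and>
      0 \<le> snd (apply_bcontfun g s) \<and> snd (apply_bcontfun g s) \<le> R \<and>
      dist (apply_bcontfun g s) (apply_bcontfun g t) \<le> L * dist s t}"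
    unfolding admissible_def lipschitz_on_def using L_nonneg
    by (auto simp: image_subset_iff mem_Times_iff)
  also have "closed \<dots>"
    by (intro closed_Collect_all closed_Collect_conj closed_Collect_le continuous_intros
        continuous_on_eval_bcontfun)
  finally show ?thesis .
qed

lemma picard_fixed_point: "\<exists>g. admissible g \<and> picard g = g"
proof -
  define S where "S = {g :: real \<Rightarrow>\<^sub>C (real \<times> real). admissible (apply_bcontfun g)}"
  define T where "T g = Bcontfun (picard g)" for g :: "real \<Rightarrow>\<^sub>C (real \<times> real)"
  have T: "apply_bcontfun (T g) = picard g" if "g \<in> S" for g
  proof -
    have "admissible (picard g)" using that picard_admissible unfolding S_def by blast
    then show ?thesis unfolding T_def by (intro Bcontfun_inverse admissible_bcontfun)
  qed
  have "\<exists>!g\<in>S. T g = g"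
  proof (rule Banach_fix)
    show "complete S" using closed_admissible unfolding S_def by (simp add: complete_eq_closed)
    have "0 \<le> D 1 2" "D 1 2 \<le> R" "0 \<le> D 2 2" "D 2 2 \<le> R" using D_nonneg D_le_R by auto
    moreover have "L-lipschitz_on UNIV (\<lambda>_. (D 1 2, D 2 2))"
      using L_nonneg by (intro lipschitz_onI) auto
    ultimately have "admissible (\<lambda>_. (D 1 2, D 2 2))"
      unfolding admissible_def by auto
    then have "const_bcontfun (D 1 2, D 2 2) \<in> S" unfolding S_def by (simp add: const_bcontfun.rep_eq)
    then show "S \<noteq> {}" by blast
    show "T ` S \<subseteq> S"
    proof (rule image_subsetI)
      fix g assume "g \<in> S"
      then show "T g \<in> S" using T picard_admissible unfolding S_def by simp
    qed
    fix g h assume gh: "g \<in> S" "h \<in> S"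
    then have ranges: "range g \<subseteq> {0..R} \<times> {0..R}" "range h \<subseteq> {0..R} \<times> {0..R}"
      unfolding S_def admissible_def by auto
    show "dist (T g) (T h) \<le> 1/2 * dist g h"
    proof (rule dist_bound)
      fix x
      have "dist (picard g x) (picard h x) \<le> dist g h / 2"
        using continuous_on_apply_bcontfun ranges(1) continuous_on_apply_bcontfun ranges(2) dist_bounded
        by (rule dist_picard_le)
      then show "dist (T g x) (T h x) \<le> 1/2 * dist g h" unfolding T[OF gh(1)] T[OF gh(2)] by simp
    qed
  qed simp_all
  then obtain g where g: "g \<in> S" "T g = g" by blast
  then have "picard (apply_bcontfun g) = apply_bcontfun g" using T[OF g(1)] by simp
  with g(1) show ?thesis unfolding S_def by blast
qed

lemma solution_exists: "\<exists>\<Omega>. is_solution D b \<beta> \<Lambda> \<Omega>"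
proof -
  obtain g where g: "admissible g" "picard g = g" using picard_fixed_point by blast
  have cont: "continuous_on UNIV g" and box: "range g \<subseteq> {0..R} \<times> {0..R}"
    using g(1) lipschitz_on_continuous_on unfolding admissible_def by auto
  have "is_solution D b \<beta> \<Lambda> (\<lambda>l j. l * of_pair (g l) j)"
    unfolding is_solution_def
  proof (intro conjI ballI)
    fix i :: nat and l :: real assume i: "i \<in> {1,2}" and l: "l \<in> {0<..\<Lambda>}"
    have "0 \<le> of_pair (g l) i" using of_pair_in_box[OF _ i, of "g l" R] box by auto
    then show "0 \<le> l * of_pair (g l) i" using l by simp
    have integrand: "integrand D b \<beta> (\<lambda>l j. l * of_pair (g l) j) l i w
        = l\<^sup>2 * (DN D b (of_pair (g (l * (1 - w) powr \<beta>))) i * (\<beta> * w powr (\<beta> - 1)))"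
      if "w \<in> {0<..<1}" for w
      using integrand_scaled[OF that, of D b \<beta> "\<lambda>l. of_pair (g l)"] by simp
    show "set_integrable lborel {0<..<1} (integrand D b \<beta> (\<lambda>l j. l * of_pair (g l) j) l i)"
      using set_integrable_mult_right[OF set_integrable_mean_DN[OF cont box i, of l], of "l\<^sup>2"]
      by (subst set_integrable_cong[OF refl refl integrand]) auto
    have integral: "(LINT w:{0<..<1}|lborel. integrand D b \<beta> (\<lambda>l j. l * of_pair (g l) j) l i w) = l\<^sup>2 * mean_DN g i l"
      unfolding mean_DN_def set_integral_mult_right[symmetric]
      by (rule set_lebesgue_integral_cong) (use integrand in auto)
    have fixed: "of_pair (g l) i = D i 2 - \<Gamma> * l * mean_DN g i l"
      using of_pair_picard[OF i, of g l] g(2) l by (simp add: cbox_interval)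
    show "l * of_pair (g l) i = D i 2 * l - \<Gamma> * (LINT w:{0<..<1}|lborel. integrand D b \<beta> (\<lambda>l j. l * of_pair (g l) j) l i w)"
      unfolding integral fixed by (simp add: power2_eq_square algebra_simps)
  next
    fix i :: nat
    show "continuous_on {0<..\<Lambda>} (\<lambda>l. l * of_pair (g l) i)"
      by (intro continuous_intros continuous_on_of_pair continuous_on_subset[OF cont]) simp
  qed
  then show ?thesis by blast
qed

lemma solution_bounds:
  assumes sol: "is_solution D b \<beta> \<Lambda> X" and l: "l \<in> {0<..\<Lambda>}" and i: "i \<in> {1,2}"
  shows "0 \<le> X l i \<and> X l i \<le> R * l"
proof -
  have nonneg: "\<And>s k. s \<in> {0<..\<Lambda>} \<Longrightarrow> k \<in> {1,2} \<Longrightarrow> 0 \<le> X s k"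
    and eq: "X l i = D i 2 * l - \<Gamma> * (LINT w:{0<..<1}|lborel. integrand D b \<beta> X l i w)"
    using sol l i unfolding is_solution_def by auto
  have "0 \<le> \<Gamma> * (LINT w:{0<..<1}|lborel. integrand D b \<beta> X l i w)"
  proof (intro mult_nonneg_nonneg Gamma_nonneg set_integral_nonneg_real)
    fix w :: real assume w: "w \<in> {0<..<1}"
    have "0 \<le> DN D b (X (l * (1 - w) powr \<beta>)) i"
      using nonneg[OF scaled_time_mem[OF _ l w]] beta_pos by (intro DN_nonneg i) auto
    then show "0 \<le> integrand D b \<beta> X l i w" unfolding integrand_def using beta_pos by simp
  qed
  moreover have "D i 2 * l \<le> R * l" using D_le_R[OF i] l by (intro mult_right_mono) auto
  ultimately show ?thesis using nonneg[OF l i] eq by linarith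
qed

lemma solution_diff_contract:
  assumes X: "is_solution D b \<beta> \<Lambda> X" and Y: "is_solution D b \<beta> \<Lambda> Y" and m: "0 \<le> m"
    and close: "\<And>s k. s \<in> {0<..\<Lambda>} \<Longrightarrow> k \<in> {1,2} \<Longrightarrow> \<bar>X s k - Y s k\<bar> \<le> m * s"
    and l: "l \<in> {0<..\<Lambda>}" and i: "i \<in> {1,2}"
  shows "\<bar>X l i - Y l i\<bar> \<le> m / 2 * l"
proof -
  let ?I = "\<lambda>Z. LINT w:{0<..<1}|lborel. integrand D b \<beta> Z l i w"
  let ?C = "K * R * m * l\<^sup>2"
  have intX: "set_integrable lborel {0<..<1} (integrand D b \<beta> X l i)"
    and eqX: "X l i = D i 2 * l - \<Gamma> * ?I X"
    and intY: "set_integrable lborel {0<..<1} (integrand D b \<beta> Y l i)"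
    and eqY: "Y l i = D i 2 * l - \<Gamma> * ?I Y"
    using X Y l i unfolding is_solution_def by auto
  have pointwise: "\<bar>integrand D b \<beta> Y l i w - integrand D b \<beta> X l i w\<bar> \<le> ?C * (\<beta> * w powr (\<beta> - 1))"
    if w: "w \<in> {0<..<1}" for w
  proof -
    define p where "p = (1 - w) powr \<beta>"
    define s where "s = l * p"
    have p: "0 < p" unfolding p_def using w by simp
    have s: "s \<in> {0<..\<Lambda>}" unfolding s_def p_def using scaled_time_mem[OF _ l w] beta_pos by simp
    have "\<bar>DN D b (Y s) i - DN D b (X s) i\<bar> \<le> K * (R * s * (m * s))"
      using solution_bounds[OF X s] solution_bounds[OF Y s] close[OF s]
      by (intro DN_diff_le i) (auto simp: abs_minus_commute)
    also have "\<dots> = ?C * (p * p)" unfolding s_def by (simp add: power2_eq_square)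
    finally have DN_diff: "\<bar>DN D b (Y s) i - DN D b (X s) i\<bar> / (p * p) \<le> ?C"
      using p by (simp add: divide_le_eq)
    have "(1 - w) powr (2 * \<beta>) = p * p" unfolding p_def using w by (simp add: powr_add[symmetric])
    then have "integrand D b \<beta> Y l i w - integrand D b \<beta> X l i w
        = (DN D b (Y s) i - DN D b (X s) i) / (p * p) * (\<beta> * w powr (\<beta> - 1))"
      unfolding integrand_def s_def p_def by (simp add: diff_divide_distrib left_diff_distrib)
    moreover have "0 < p * p" "0 \<le> \<beta> * w powr (\<beta> - 1)" using p beta_pos by auto
    ultimately show ?thesis
      using mult_right_mono[OF DN_diff] by (metis abs_mult abs_divide abs_of_pos abs_of_nonneg)
  qed
  have "\<bar>?I Y - ?I X\<bar> \<le> (LINT w:{0<..<1}|lborel. ?C * (\<beta> * w powr (\<beta> - 1)))"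
    unfolding set_integral_diff(2)[OF intY intX, symmetric]
    by (intro abs_set_integral_le_set_integral set_integral_diff(1) intX intY pointwise
        set_integrable_mult_right[OF set_integrable_power_weight[OF beta_pos]])
  also have "\<dots> = ?C" using set_integral_power_weight[OF beta_pos] by simp
  finally have "\<bar>X l i - Y l i\<bar> \<le> \<Gamma> * ?C"
    using eqX eqY Gamma_nonneg by (simp add: abs_mult right_diff_distrib[symmetric] mult_left_mono)
  also have "\<dots> = (\<Gamma> * l * K * R) * (m * l)" by (simp add: power2_eq_square)
  also have "\<dots> \<le> 1/4 * (m * l)"
  proof (rule mult_right_mono)
    have "\<Gamma> * l * K * R \<le> \<Gamma> * \<Lambda> * K * R"
      using l Gamma_nonneg K_nonneg R_nonneg by (intro mult_right_mono mult_left_mono) auto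
    then show "\<Gamma> * l * K * R \<le> 1/4" using Lambda_contraction by linarith
  qed (use m l in simp)
  also have "\<dots> \<le> m / 2 * l" using m l by simp
  finally show ?thesis .
qed

lemma solution_unique:
  assumes X: "is_solution D b \<beta> \<Lambda> X" and Y: "is_solution D b \<beta> \<Lambda> Y"
    and l: "l \<in> {0<..\<Lambda>}" and i: "i \<in> {1,2}"
  shows "X l i = Y l i"
proof -
  have halving: "\<bar>X s k - Y s k\<bar> \<le> R / 2 ^ n * s" if "s \<in> {0<..\<Lambda>}" "k \<in> {1,2}" for n s k
    using that
  proof (induction n arbitrary: s k)
    case 0
    then show ?case
      using solution_bounds[OF X "0.prems"] solution_bounds[OF Y "0.prems"] by (simp add: abs_le_iff)
  next
    case (Suc n)
    have "\<bar>X s k - Y s k\<bar> \<le> R / 2 ^ n / 2 * s"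
      using R_nonneg Suc.IH Suc.prems by (intro solution_diff_contract[OF X Y]) auto
    then show ?case by (simp add: divide_divide_eq_left mult.commute)
  qed
  show ?thesis
  proof (rule ccontr)
    assume "X l i \<noteq> Y l i"
    moreover have pos: "0 < R * l + 1" using R_nonneg l by (simp add: add_nonneg_pos)
    ultimately have e: "0 < \<bar>X l i - Y l i\<bar> / (R * l + 1)" by simp
    obtain n where n: "(1/2::real) ^ n < \<bar>X l i - Y l i\<bar> / (R * l + 1)"
      using real_arch_pow_inv[OF e, of "1/2"] by auto
    have "R / 2 ^ n * l \<le> (R * l + 1) * (1/2) ^ n" by (simp add: power_divide divide_right_mono)
    also have "\<dots> < \<bar>X l i - Y l i\<bar>" using n pos_less_divide_eq[OF pos] by (simp add: mult.commute)
    finally show False using halving[OF l i, of n] by simp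
  qed
qed

end

lemma (in renewal_equation) exists_small_window:
  assumes "0 < D 1 2" "0 < D 2 2"
  shows "\<exists>R \<Lambda>. small_window D b \<beta> R \<Lambda>"
proof -
  define R where "R = D 1 2 + D 2 2"
  define A where "A = \<Gamma> * K * R"
  define d where "d = min (D 1 2) (D 2 2)"
  define \<Lambda> where "\<Lambda> = min (1 / (4 * (A + 1))) (d / (A * R + 1))"
  have A: "0 \<le> A" and R: "0 \<le> R" and d: "0 < d"
    using Gamma_nonneg K_nonneg assms unfolding A_def R_def d_def by auto
  have "small_window D b \<beta> R \<Lambda>"
  proof unfold_locales
    show "D i 2 \<le> R" if "i \<in> {1,2}" for i using that assms unfolding R_def by auto
    show "0 < \<Lambda>" unfolding \<Lambda>_def using A R d by (simp add: add_nonneg_pos)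
    have "\<Gamma> * \<Lambda> * K * R = A * \<Lambda>" unfolding A_def by simp
    also have "\<dots> \<le> A * (1 / (4 * (A + 1)))" unfolding \<Lambda>_def using A by (intro mult_left_mono) auto
    also have "\<dots> \<le> 1/4" using A by (simp add: field_simps)
    finally show "\<Gamma> * \<Lambda> * K * R \<le> 1/4" .
    show "\<Gamma> * \<Lambda> * (K * (R * R)) \<le> D i 2" if "i \<in> {1,2}" for i
    proof -
      have "\<Gamma> * \<Lambda> * (K * (R * R)) = A * R * \<Lambda>" unfolding A_def by simp
      also have "\<dots> \<le> A * R * (d / (A * R + 1))"
        unfolding \<Lambda>_def using A R by (intro mult_left_mono) auto
      also have "\<dots> \<le> d"
        using A R d by (simp add: divide_le_eq mult_left_mono add_nonneg_pos)
      also have "\<dots> \<le> D i 2" using that unfolding d_def by auto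
      finally show ?thesis .
    qed
  qed
  then show ?thesis by blast
qed

theorem lemma7:
  fixes D :: "nat \<Rightarrow> nat \<Rightarrow> real" and b :: "nat \<Rightarrow> nat \<Rightarrow> nat \<Rightarrow> real"
  assumes D_pos: "\<forall>i\<in>{1,2}. \<forall>j\<in>{1,2}. 0 < D i j"
    and b_nonneg: "\<forall>i\<in>{1,2}. \<forall>j\<in>{1,2}. \<forall>k\<in>{1,2}. 0 \<le> b i j k"
    and b_sym: "\<forall>i\<in>{1,2}. \<forall>j\<in>{1,2}. \<forall>k\<in>{1,2}. b i j k = b i k j"
    and \<beta>: "0 < \<beta>" "\<beta> \<le> 1"
  shows "\<exists>\<Lambda>>0. \<exists>\<Omega>. is_solution D b \<beta> \<Lambda> \<Omega> \<and>
           (\<forall>\<Omega>'. is_solution D b \<beta> \<Lambda> \<Omega>' \<longrightarrow>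
              (\<forall>l\<in>{0<..\<Lambda>}. \<forall>i\<in>{1,2}. \<Omega>' l i = \<Omega> l i))"
proof -
  interpret renewal_equation D b \<beta>
    using D_pos b_nonneg \<beta> by unfold_locales (auto intro: less_imp_le)
  obtain R \<Lambda> where "small_window D b \<beta> R \<Lambda>"
    using exists_small_window D_pos by blast
  then interpret small_window D b \<beta> R \<Lambda> .
  obtain \<Omega> where "is_solution D b \<beta> \<Lambda> \<Omega>" using solution_exists by blast
  then show ?thesis using Lambda_pos solution_unique by blast
qed

end
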